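(* Let $R$ be a ring with $1=1_R$ and let $p\le q$ be a $1$-balanced lattice inequality in the variables $x_1,\dots,x_n$. Then the following are equivalent: (α1) for every unital left $R$-module $M$ and all $B_1,\dots,B_n\in\mathrm{Sub}\,M$, $p(B_1,\dots,B_n)\subseteq q(B_1,\dots,B_n)$; (α2) the paired-bipolar-graphs problem $\mathrm{Problem}(G_p,G_q,\phi,\psi,(R,+),1_R)$ with $\phi(i)=\xi_p(x_i)$ and $\psi(i)=\xi_q(x_i)$ has a solution.
   Context: $p\le q$ is $1$-balanced if every variable occurring in it occurs exactly once in $p$ and exactly once in $q$ (so $p$, $q$ are repetition-free in the same variables). For a repetition-free term $r$, the bipolar digraph $G_r$ (source $s_{G_r}$, sink $t_{G_r}$) and bijection $\xi_r$ from the variables of $r$ onto $E(G_r)$ are defined inductively: for a variable $x$, two vertices and one edge $\xi_r(x)$ from source to sink; for $r=r_1\vee r_2$, identify $t_{G_{r_1}}$ with $s_{G_{r_2}}$ (series composition, $s_{G_r}=s_{G_{r_1}}$, $t_{G_r}=t_{G_{r_2}}$); for $r=r_1\wedge r_2$, identify the two sources and the two sinks (parallel composition); $\xi_r=\xi_{r_1}\cup\xi_{r_2}$. Paired-bipolar-graphs problem $\mathrm{Problem}(G,H,\phi,\psi,\mathbf A,b)$: $G,H$ bipolar digraphs (acyclic, unique source and sink, at least two vertices) with $n$ edges, bijections $\phi\colon\{1,\dots,n\}\to E(G)$, $\psi\colon\{1,\dots,n\}\to E(H)$, $e_i=\phi(i)$, $e'_i=\psi(i)$, Abelian group $\mathbf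 A=(A;+)$, $b\in A$. For $\vec a\in A^n$, $X\subseteq\{1,\dots,n\}$, $\mathrm{Eff}_{\vec a}(X)(v)=\sum_{i\in X,\,h(e_i)=v}a_i-\sum_{i\in X,\,t(e_i)=v}a_i$ for $v\in V(G)$; $\mathrm{Tr}_b(s_G)=-b$, $\mathrm{Tr}_b(t_G)=b$, $\mathrm{Tr}_b(v)=0$ otherwise. $\vec a$ is a solution if $\mathrm{Eff}_{\vec a}(X)=\mathrm{Tr}_b$ for every $X$ such that $\{e'_j:j\in X\}$ is the edge set of a maximal directed path in $H$. *)

theory Defs
  imports Main "HOL-Library.Sublist"
begin

datatype lterm = Var nat | Join lterm lterm | Meet lterm lterm

fun vars :: "lterm \<Rightarrow> nat list" where
  "vars (Var x) = [x]"
| "vars (Join r1 r2) = vars r1 @ vars r2"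
| "vars (Meet r1 r2) = vars r1 @ vars r2"

definition balanced_in :: "lterm \<Rightarrow> lterm \<Rightarrow> nat \<Rightarrow> bool" where
  "balanced_in p q n \<longleftrightarrow>
     distinct (vars p) \<and> set (vars p) = {1..n} \<and>
     distinct (vars q) \<and> set (vars q) = {1..n}"

definition left_module ::
  "'m set \<Rightarrow> ('m \<Rightarrow> 'm \<Rightarrow> 'm) \<Rightarrow> 'm \<Rightarrow> ('a::ring_1 \<Rightarrow> 'm \<Rightarrow> 'm) \<Rightarrow> bool" where
  "left_module M add z sm \<longleftrightarrow>
     z \<in> M \<and>
     (\<forall>x\<in>M. \<forall>y\<in>M. add x y \<in> M) \<and>
     (\<forall>r. \<forall>x\<in>M. sm r x \<in> M) \<and>
     (\<forall>x\<in>M. \<forall>y\<in>M. \<forall>w\<in>M. add (add x y) w = add x (add y w)) \<and>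
     (\<forall>x\<in>M. \<forall>y\<in>M. add x y = add y x) \<and>
     (\<forall>x\<in>M. add z x = x) \<and>
     (\<forall>x\<in>M. \<exists>y\<in>M. add x y = z) \<and>
     (\<forall>r. \<forall>x\<in>M. \<forall>y\<in>M. sm r (add x y) = add (sm r x) (sm r y)) \<and>
     (\<forall>r s. \<forall>x\<in>M. sm (r + s) x = add (sm r x) (sm s x)) \<and>
     (\<forall>r s. \<forall>x\<in>M. sm (r * s) x = sm r (sm s x)) \<and>
     (\<forall>x\<in>M. sm 1 x = x)"

definition submodule ::
  "'m set \<Rightarrow> ('m \<Rightarrow> 'm \<Rightarrow> 'm) \<Rightarrow> 'm \<Rightarrow> ('a::ring_1 \<Rightarrow> 'm \<Rightarrow> 'm) \<Rightarrow> 'm set \<Rightarrow> bool" where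
  "submodule M add z sm S \<longleftrightarrow>
     S \<subseteq> M \<and> z \<in> S \<and>
     (\<forall>x\<in>S. \<forall>y\<in>S. add x y \<in> S) \<and>
     (\<forall>r. \<forall>x\<in>S. sm r x \<in> S)"

fun lev :: "('m \<Rightarrow> 'm \<Rightarrow> 'm) \<Rightarrow> (nat \<Rightarrow> 'm set) \<Rightarrow> lterm \<Rightarrow> 'm set" where
  "lev add B (Var i) = B i"
| "lev add B (Join r1 r2) = {add x y | x y. x \<in> lev add B r1 \<and> y \<in> lev add B r2}"
| "lev add B (Meet r1 r2) = lev add B r1 \<inter> lev add B r2"

definition holds_in_module ::
  "lterm \<Rightarrow> lterm \<Rightarrow> nat \<Rightarrow> 'm set \<Rightarrow> ('m \<Rightarrow> 'm \<Rightarrow> 'm) \<Rightarrow> 'm \<Rightarrow> ('a::ring_1 \<Rightarrow> 'm \<Rightarrow> 'm) \<Rightarrow> bool" where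
  "holds_in_module p q n M add z sm \<longleftrightarrow>
     (\<forall>B. (\<forall>i\<in>{1..n}. submodule M add z sm (B i)) \<longrightarrow> lev add B p \<subseteq> lev add B q)"

text \<open>bld r s t f builds G_r between given source s and sink t, using fresh vertex
  names from f on; it returns the edge list (x, tail, head), where the edge labelled x is
  xi_r(x), and the next fresh vertex.\<close>
fun bld :: "lterm \<Rightarrow> nat \<Rightarrow> nat \<Rightarrow> nat \<Rightarrow> (nat \<times> nat \<times> nat) list \<times> nat" where
  "bld (Var x) s t f = ([(x, s, t)], f)"
| "bld (Join r1 r2) s t f =
     (let (E1, f1) = bld r1 s f (Suc f); (E2, f2) = bld r2 f t f1 in (E1 @ E2, f2))"
| "bld (Meet r1 r2) s t f =
     (let (E1, f1) = bld r1 s t f; (E2, f2) = bld r2 s t f1 in (E1 @ E2, f2))"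

text \<open>G_r: vertices {0..<gnv r}, source 0, sink 1.\<close>
definition gnv :: "lterm \<Rightarrow> nat" where
  "gnv r = snd (bld r 0 1 2)"

definition gsrc :: nat where "gsrc = 0"
definition gsnk :: nat where "gsnk = 1"

definition etail :: "lterm \<Rightarrow> nat \<Rightarrow> nat" where
  "etail r x = fst (the (map_of (fst (bld r 0 1 2)) x))"

definition ehead :: "lterm \<Rightarrow> nat \<Rightarrow> nat" where
  "ehead r x = snd (the (map_of (fst (bld r 0 1 2)) x))"

text \<open>Directed paths in G_r, as nonempty lists of edges (named by their variables).\<close>
definition dpath :: "lterm \<Rightarrow> nat list \<Rightarrow> bool" where
  "dpath r es \<longleftrightarrow> es \<noteq> [] \<and> set es \<subseteq> set (vars r) \<and> distinct es \<and>
     (\<forall>k. Suc k < length es \<longrightarrow> ehead r (es ! k) = etail r (es ! Suc k)) \<and>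
     distinct (etail r (hd es) # map (ehead r) es)"

definition maxpath :: "lterm \<Rightarrow> nat list \<Rightarrow> bool" where
  "maxpath r es \<longleftrightarrow> dpath r es \<and> \<not> (\<exists>es'. dpath r es' \<and> sublist es es' \<and> es' \<noteq> es)"

definition Eff :: "lterm \<Rightarrow> (nat \<Rightarrow> 'a::ab_group_add) \<Rightarrow> nat set \<Rightarrow> nat \<Rightarrow> 'a" where
  "Eff p a X v = (\<Sum>i\<in>{i\<in>X. ehead p i = v}. a i) - (\<Sum>i\<in>{i\<in>X. etail p i = v}. a i)"

definition Tr :: "'a::ab_group_add \<Rightarrow> nat \<Rightarrow> 'a" where
  "Tr b v = (if v = gsrc then - b else if v = gsnk then b else 0)"

definition is_solution :: "lterm \<Rightarrow> lterm \<Rightarrow> 'a::ab_group_add \<Rightarrow> (nat \<Rightarrow> 'a) \<Rightarrow> bool" where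
  "is_solution p q b a \<longleftrightarrow>
     (\<forall>X. (\<exists>es. maxpath q es \<and> set es = X) \<longrightarrow>
        (\<forall>v < gnv p. Eff p a X v = Tr b v))"

definition problem_solvable :: "lterm \<Rightarrow> lterm \<Rightarrow> 'a::ab_group_add \<Rightarrow> bool" where
  "problem_solvable p q b \<longleftrightarrow> (\<exists>a. is_solution p q b a)"

end

theory Submission
  imports Defs "HOL-Algebra.Ring"
begin

text \<open>
  Every \<open>u \<in> p(B)\<close> is the total rise \<open>w(t) - w(s)\<close> of a potential \<open>w\<close> on the vertices of
  \<open>G\<^sub>p\<close> whose rise \<open>c\<^sub>i\<close> along each edge \<open>x\<^sub>i\<close> lies in \<open>B\<^sub>i\<close>. On the edge set of a maximal path
  of \<open>G\<^sub>q\<close> a solution \<open>a\<close> is a unit flow from source to sink of \<open>G\<^sub>p\<close>, so \<open>\<Sum> a\<^sub>i c\<^sub>i\<close> over that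
  edge set telescopes to \<open>u\<close>. The maximal paths of \<open>G\<^sub>q\<close> are exactly its source-to-sink paths,
  and an element that is the sum of the same choice \<open>d\<^sub>j \<in> B\<^sub>j\<close> along every such path lies in
  \<open>q(B)\<close>; hence \<open>u \<in> q(B)\<close>.

  Conversely, in the module of functions from vertices to \<open>R\<close> take for \<open>B\<^sub>i\<close> the multiples of
  the boundary \<open>\<delta>(head x\<^sub>i) - \<delta>(tail x\<^sub>i)\<close> of the edge \<open>x\<^sub>i\<close> of \<open>G\<^sub>p\<close>.
  Then \<open>\<delta>(1) - \<delta>(0) \<in> p(B) \<subseteq> q(B)\<close>, and writing it as a sum along the source-to-sink paths of
  \<open>G\<^sub>q\<close> yields coefficients \<open>a\<^sub>i\<close> whose effect on every such path is \<open>Tr\<^sub>1\<close>.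
\<close>

lemma bld_Join:
  "bld (Join r1 r2) s t f =
     (fst (bld r1 s f (Suc f)) @ fst (bld r2 f t (snd (bld r1 s f (Suc f)))),
      snd (bld r2 f t (snd (bld r1 s f (Suc f)))))"
  by (simp add: split_beta Let_def)

lemma bld_Meet:
  "bld (Meet r1 r2) s t f =
     (fst (bld r1 s t f) @ fst (bld r2 s t (snd (bld r1 s t f))),
      snd (bld r2 s t (snd (bld r1 s t f))))"
  by (simp add: split_beta Let_def)

declare bld.simps(2,3)[simp del]

lemma bld_fresh_ge: "f \<le> snd (bld r s t f)"
proof (induction r arbitrary: s t f)
  case (Join r1 r2)
  have "Suc f \<le> snd (bld r1 s f (Suc f))" by (rule Join.IH(1))
  also have "\<dots> \<le> snd (bld r2 f t (snd (bld r1 s f (Suc f))))" by (rule Join.IH(2))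
  finally show ?case by (simp add: bld_Join)
next
  case (Meet r1 r2)
  have "f \<le> snd (bld r1 s t f)" by (rule Meet.IH(1))
  also have "\<dots> \<le> snd (bld r2 s t (snd (bld r1 s t f)))" by (rule Meet.IH(2))
  finally show ?case by (simp add: bld_Meet)
qed simp

lemma map_fst_bld: "map fst (fst (bld r s t f)) = vars r"
  by (induction r arbitrary: s t f) (auto simp: bld_Join bld_Meet)

lemma bld_edge_ends:
  assumes "(x, a, b) \<in> set (fst (bld r s t f))"
  shows "(a = s \<or> f \<le> a \<and> a < snd (bld r s t f)) \<and> (b = t \<or> f \<le> b \<and> b < snd (bld r s t f))"
  using assms
proof (induction r arbitrary: s t f)
  case (Join r1 r2)
  have "Suc f \<le> snd (bld r1 s f (Suc f))"
    and "snd (bld r1 s f (Suc f)) \<le> snd (bld r2 f t (snd (bld r1 s f (Suc f))))"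
    by (rule bld_fresh_ge)+
  with Join show ?case
    by (auto simp: bld_Join dest!: Join.IH)
next
  case (Meet r1 r2)
  have "f \<le> snd (bld r1 s t f)" and "snd (bld r1 s t f) \<le> snd (bld r2 s t (snd (bld r1 s t f)))"
    by (rule bld_fresh_ge)+
  with Meet show ?case
    by (auto simp: bld_Meet dest!: Meet.IH)
qed simp

text \<open>\<open>T\<close> and \<open>H\<close> give tail and head of each edge of the copy of \<open>G\<^sub>r\<close> that \<open>bld\<close> places
  between \<open>s\<close> and \<open>t\<close>. Working with such maps, rather than with \<open>etail\<close> and \<open>ehead\<close> of the
  whole graph, lets the arguments below proceed by induction on subterms.\<close>
definition bld_agrees :: "(nat \<Rightarrow> nat) \<Rightarrow> (nat \<Rightarrow> nat) \<Rightarrow> lterm \<Rightarrow> nat \<Rightarrow> nat \<Rightarrow> nat \<Rightarrow> bool" where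
  "bld_agrees T H r s t f \<longleftrightarrow> (\<forall>(x, a, b) \<in> set (fst (bld r s t f)). T x = a \<and> H x = b)"

lemma bld_agrees_Var: "bld_agrees T H (Var x) s t f \<longleftrightarrow> T x = s \<and> H x = t"
  by (simp add: bld_agrees_def)

lemma bld_agrees_Join:
  "bld_agrees T H (Join r1 r2) s t f \<longleftrightarrow>
     bld_agrees T H r1 s f (Suc f) \<and> bld_agrees T H r2 f t (snd (bld r1 s f (Suc f)))"
  unfolding bld_agrees_def bld_Join by (auto simp: Ball_def split: prod.splits)

lemma bld_agrees_Meet:
  "bld_agrees T H (Meet r1 r2) s t f \<longleftrightarrow>
     bld_agrees T H r1 s t f \<and> bld_agrees T H r2 s t (snd (bld r1 s t f))"
  unfolding bld_agrees_def bld_Meet by (auto simp: Ball_def split: prod.splits)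

lemma bld_agrees_ends:
  assumes "bld_agrees T H r s t f" and "x \<in> set (vars r)"
  shows "(T x = s \<or> f \<le> T x \<and> T x < snd (bld r s t f)) \<and> (H x = t \<or> f \<le> H x \<and> H x < snd (bld r s t f))"
proof -
  from assms(2) have "x \<in> set (map fst (fst (bld r s t f)))" by (simp add: map_fst_bld)
  then obtain a b where ab: "(x, a, b) \<in> set (fst (bld r s t f))" by auto
  with assms(1) have "T x = a \<and> H x = b" by (auto simp: bld_agrees_def)
  with bld_edge_ends[OF ab] show ?thesis by simp
qed

lemma bld_agrees_graph: "distinct (vars r) \<Longrightarrow> bld_agrees (etail r) (ehead r) r 0 1 2"
  unfolding bld_agrees_def
proof clarify
  fix x a b assume "distinct (vars r)" and xab: "(x, a, b) \<in> set (fst (bld r 0 1 2))"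
  then have "distinct (map fst (fst (bld r 0 1 2)))" by (simp add: map_fst_bld)
  from map_of_is_SomeI[OF this xab] show "etail r x = a \<and> ehead r x = b"
    by (simp add: etail_def ehead_def)
qed

fun walk :: "(nat \<Rightarrow> nat) \<Rightarrow> (nat \<Rightarrow> nat) \<Rightarrow> nat \<Rightarrow> nat \<Rightarrow> nat list \<Rightarrow> bool" where
  "walk T H u v [] \<longleftrightarrow> u = v"
| "walk T H u v (e # es) \<longleftrightarrow> T e = u \<and> walk T H (H e) v es"

lemma walk_append: "walk T H u v (xs @ ys) \<longleftrightarrow> (\<exists>w. walk T H u w xs \<and> walk T H w v ys)"
  by (induction xs arbitrary: u) auto

lemma walk_hd: "walk T H u v es \<Longrightarrow> es \<noteq> [] \<Longrightarrow> u = T (hd es)"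
  by (cases es) auto

lemma walk_last: "walk T H u v es \<Longrightarrow> es \<noteq> [] \<Longrightarrow> v = H (last es)"
proof (induction es arbitrary: u)
  case (Cons e es) then show ?case by (cases es) auto
qed simp

lemma walk_iff_chain:
  assumes "es \<noteq> []"
  shows "walk T H u v es \<longleftrightarrow>
    T (hd es) = u \<and> H (last es) = v \<and> (\<forall>k. Suc k < length es \<longrightarrow> H (es ! k) = T (es ! Suc k))"
  using assms
proof (induction es arbitrary: u)
  case (Cons e es)
  show ?case
  proof (cases es)
    case (Cons e' es')
    have "(\<forall>k. Suc k < length (e # es) \<longrightarrow> H ((e # es) ! k) = T ((e # es) ! Suc k)) \<longleftrightarrow>
        H e = T e' \<and> (\<forall>k. Suc k < length es \<longrightarrow> H (es ! k) = T (es ! Suc k))"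
      (is "?all \<longleftrightarrow> _")
    proof
      assume all: ?all
      show "H e = T e' \<and> (\<forall>k. Suc k < length es \<longrightarrow> H (es ! k) = T (es ! Suc k))"
        using all[rule_format, of 0] all[rule_format, of "Suc _"] by (auto simp: Cons)
    next
      assume "H e = T e' \<and> (\<forall>k. Suc k < length es \<longrightarrow> H (es ! k) = T (es ! Suc k))"
      then show ?all by (auto simp: Cons nth_Cons split: nat.split)
    qed
    with Cons.IH show ?thesis by (auto simp: Cons)
  qed simp
qed simp

lemma walk_confined:
  "walk T H u v es \<Longrightarrow> set es \<subseteq> Ea \<union> Eb \<Longrightarrow> u \<in> W \<Longrightarrow>
   \<forall>e\<in>Ea. H e \<in> W \<Longrightarrow> \<forall>e\<in>Eb. T e \<notin> W \<Longrightarrow> set es \<subseteq> Ea"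
  by (induction es arbitrary: u) auto

lemma walk_split_at:
  "walk T H u v es \<Longrightarrow> set es \<subseteq> Ea \<union> Eb \<Longrightarrow> u \<in> W \<Longrightarrow>
   \<forall>e\<in>Ea. H e = m \<or> H e \<in> W \<Longrightarrow> \<forall>e\<in>Eb. T e \<notin> W \<Longrightarrow>
   set es \<subseteq> Ea \<or> (\<exists>es1 es2. es = es1 @ es2 \<and> set es1 \<subseteq> Ea \<and> walk T H u m es1 \<and> walk T H m v es2)"
proof (induction es arbitrary: u)
  case (Cons e es)
  then have e: "e \<in> Ea" "T e = u" by auto
  show ?case
  proof (cases "H e = m")
    case True
    with Cons.prems e show ?thesis by (intro disjI2 exI[of _ "[e]"] exI[of _ es]) auto
  next
    case False
    with e Cons.prems have "set es \<subseteq> Ea \<or>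
        (\<exists>es1 es2. es = es1 @ es2 \<and> set es1 \<subseteq> Ea \<and> walk T H (H e) m es1 \<and> walk T H m v es2)"
      by (intro Cons.IH) auto
    then show ?thesis
    proof
      assume "\<exists>es1 es2. es = es1 @ es2 \<and> set es1 \<subseteq> Ea \<and> walk T H (H e) m es1 \<and> walk T H m v es2"
      then obtain es1 es2 where "es = es1 @ es2" "set es1 \<subseteq> Ea" "walk T H (H e) m es1" "walk T H m v es2"
        by blast
      with e show ?thesis by (intro disjI2 exI[of _ "e # es1"] exI[of _ es2]) auto
    qed (use e in auto)
  qed
qed simp

text \<open>Edge sets of the source-to-sink paths of \<open>G\<^sub>r\<close>, read off from the term
  (see \<open>maxpath_edge_sets\<close>).\<close>
fun st_paths :: "lterm \<Rightarrow> nat set set" where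
  "st_paths (Var x) = {{x}}"
| "st_paths (Join r1 r2) = {A \<union> B | A B. A \<in> st_paths r1 \<and> B \<in> st_paths r2}"
| "st_paths (Meet r1 r2) = st_paths r1 \<union> st_paths r2"

lemma st_paths_subset_vars: "A \<in> st_paths r \<Longrightarrow> A \<subseteq> set (vars r)"
  by (induction r arbitrary: A) auto

lemma st_paths_nonempty: "st_paths r \<noteq> {}"
  by (induction r) auto

lemma walk_if_st_path:
  "bld_agrees T H r s t f \<Longrightarrow> A \<in> st_paths r \<Longrightarrow> \<exists>es. walk T H s t es \<and> set es = A"
proof (induction r arbitrary: s t f A)
  case (Var x) then show ?case by (intro exI[of _ "[x]"]) (auto simp: bld_agrees_Var)
next
  case (Join r1 r2)
  from Join.prems obtain A1 A2 where A: "A = A1 \<union> A2" "A1 \<in> st_paths r1" "A2 \<in> st_paths r2"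
    by auto
  from Join.prems(1) have "bld_agrees T H r1 s f (Suc f)"
    and "bld_agrees T H r2 f t (snd (bld r1 s f (Suc f)))" by (simp_all add: bld_agrees_Join)
  with A Join.IH obtain es1 es2 where
    "walk T H s f es1" "set es1 = A1" "walk T H f t es2" "set es2 = A2"
    by meson
  with A show ?case by (intro exI[of _ "es1 @ es2"]) (auto simp: walk_append)
next
  case (Meet r1 r2)
  then show ?case by (auto simp: bld_agrees_Meet)
qed

lemma st_walk_exists:
  assumes "bld_agrees T H r s t f"
  shows "\<exists>es. walk T H s t es \<and> set es \<subseteq> set (vars r)"
proof -
  obtain A where "A \<in> st_paths r" using st_paths_nonempty by blast
  with walk_if_st_path[OF assms] st_paths_subset_vars show ?thesis by metis
qed

lemma walk_in_Meet_cases: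
  assumes agree: "bld_agrees T H (Meet r1 r2) s t f" and "s < f" "t < f" "s \<noteq> t"
    and walk: "walk T H u v es" "es \<noteq> []" "set es \<subseteq> set (vars (Meet r1 r2))"
  shows "set es \<subseteq> set (vars r1) \<or> set es \<subseteq> set (vars r2)"
proof -
  define f1 where "f1 = snd (bld r1 s t f)"
  define f2 where "f2 = snd (bld r2 s t f1)"
  have "f \<le> f1" unfolding f1_def by (rule bld_fresh_ge)
  from agree have e1: "bld_agrees T H r1 s t f" and e2: "bld_agrees T H r2 s t f1"
    by (simp_all add: bld_agrees_Meet f1_def)
  note ends1 = bld_agrees_ends[OF e1, folded f1_def] and ends2 = bld_agrees_ends[OF e2, folded f2_def]
  from walk obtain e es' where es: "es = e # es'" and es': "walk T H (H e) v es'"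
    by (cases es) auto
  from walk es consider "e \<in> set (vars r1)" | "e \<in> set (vars r2)" by auto
  then show ?thesis
  proof cases
    case 1
    have "set es' \<subseteq> set (vars r1)"
    proof (rule walk_confined[OF es', where Eb = "set (vars r2)" and W = "{t} \<union> {f..<f1}"])
      show "\<forall>e\<in>set (vars r2). T e \<notin> {t} \<union> {f..<f1}"
      proof
        fix y assume "y \<in> set (vars r2)"
        with ends2 have "T y = s \<or> f1 \<le> T y" by blast
        with \<open>s < f\<close> \<open>t < f\<close> \<open>f \<le> f1\<close> \<open>s \<noteq> t\<close> show "T y \<notin> {t} \<union> {f..<f1}" by auto
      qed
    qed (use walk es 1 ends1 in auto)
    with 1 es show ?thesis by simp
  next
    case 2
    have "set es' \<subseteq> set (vars r2)"
    proof (rule walk_confined[OF es', where Eb = "set (vars r1)" and W = "{t} \<union> {f1..<f2}"])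
      show "\<forall>e\<in>set (vars r1). T e \<notin> {t} \<union> {f1..<f2}"
      proof
        fix y assume "y \<in> set (vars r1)"
        with ends1 have "T y = s \<or> f \<le> T y \<and> T y < f1" by blast
        with \<open>s < f\<close> \<open>t < f\<close> \<open>f \<le> f1\<close> \<open>s \<noteq> t\<close> show "T y \<notin> {t} \<union> {f1..<f2}" by auto
      qed
    qed (use walk es 2 ends2 in auto)
    with 2 es show ?thesis by simp
  qed
qed

lemma walk_in_Join_cases:
  assumes agree: "bld_agrees T H (Join r1 r2) s t f" and "s < f" "t < f" "s \<noteq> t"
    and walk: "walk T H u v es" "set es \<subseteq> set (vars (Join r1 r2))"
  shows "set es \<subseteq> set (vars r1) \<or> set es \<subseteq> set (vars r2) \<or>
    (\<exists>es1 es2. es = es1 @ es2 \<and> set es1 \<subseteq> set (vars r1) \<and> set es2 \<subseteq> set (vars r2) \<and>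
       walk T H u f es1 \<and> walk T H f v es2)"
proof -
  define f1 where "f1 = snd (bld r1 s f (Suc f))"
  define f2 where "f2 = snd (bld r2 f t f1)"
  have "Suc f \<le> f1" unfolding f1_def by (rule bld_fresh_ge)
  from agree have e1: "bld_agrees T H r1 s f (Suc f)" and e2: "bld_agrees T H r2 f t f1"
    by (simp_all add: bld_agrees_Join f1_def)
  note ends1 = bld_agrees_ends[OF e1, folded f1_def] and ends2 = bld_agrees_ends[OF e2, folded f2_def]
  have stays_in_r2: "set es' \<subseteq> set (vars r2)"
    if "walk T H w v es'" "set es' \<subseteq> set (vars (Join r1 r2))" "w \<in> {f, t} \<union> {f1..<f2}" for w es'
  proof (rule walk_confined[OF that(1), where Eb = "set (vars r1)" and W = "{f, t} \<union> {f1..<f2}"])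
    show "\<forall>e\<in>set (vars r1). T e \<notin> {f, t} \<union> {f1..<f2}"
    proof
      fix y assume "y \<in> set (vars r1)"
      with ends1 have "T y = s \<or> Suc f \<le> T y \<and> T y < f1" by blast
      with \<open>s < f\<close> \<open>t < f\<close> \<open>s \<noteq> t\<close> \<open>Suc f \<le> f1\<close> show "T y \<notin> {f, t} \<union> {f1..<f2}"
        by auto
    qed
  qed (use that ends2 in auto)
  show ?thesis
  proof (cases es)
    case (Cons e es')
    with walk consider "e \<in> set (vars r1)" | "e \<in> set (vars r2)" by auto
    then show ?thesis
    proof cases
      case 1
      have "set es \<subseteq> set (vars r1) \<or>
          (\<exists>es1 es2. es = es1 @ es2 \<and> set es1 \<subseteq> set (vars r1) \<and> walk T H u f es1 \<and> walk T H f v es2)"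
      proof (rule walk_split_at[OF walk(1), where Eb = "set (vars r2)" and W = "{s} \<union> {Suc f..<f1}"])
        show "\<forall>e\<in>set (vars r2). T e \<notin> {s} \<union> {Suc f..<f1}"
        proof
          fix y assume "y \<in> set (vars r2)"
          with ends2 have "T y = f \<or> f1 \<le> T y" by blast
          with \<open>s < f\<close> \<open>Suc f \<le> f1\<close> show "T y \<notin> {s} \<union> {Suc f..<f1}" by auto
        qed
      qed (use walk Cons 1 ends1 in auto)
      then show ?thesis
      proof
        assume "\<exists>es1 es2. es = es1 @ es2 \<and> set es1 \<subseteq> set (vars r1) \<and> walk T H u f es1 \<and> walk T H f v es2"
        then obtain es1 es2 where split: "es = es1 @ es2" "set es1 \<subseteq> set (vars r1)"
          "walk T H u f es1" "walk T H f v es2" by blast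
        with walk(2) stays_in_r2[of f es2] show ?thesis by auto
      qed simp
    next
      case 2
      with walk Cons ends2 stays_in_r2[of "H e" es'] show ?thesis by auto
    qed
  qed simp
qed

lemma st_path_if_walk:
  assumes "bld_agrees T H r s t f" "s < f" "t < f" "s \<noteq> t"
    and "walk T H s t es" "set es \<subseteq> set (vars r)"
  shows "set es \<in> st_paths r \<and> distinct (s # map H es)"
  using assms
proof (induction r arbitrary: s t f es)
  case (Var x)
  then obtain es' where es: "es = x # es'" and es': "walk T H t t es'" "set es' \<subseteq> {x}"
    and x: "T x = s" "H x = t"
    by (cases es) (auto simp: bld_agrees_Var)
  have "es' = []" using es' x \<open>s \<noteq> t\<close> by (cases es') auto
  with es x \<open>s \<noteq> t\<close> show ?case by simp
next
  case (Meet r1 r2)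
  define f1 where "f1 = snd (bld r1 s t f)"
  have "f \<le> f1" unfolding f1_def by (rule bld_fresh_ge)
  from Meet.prems(1) have e1: "bld_agrees T H r1 s t f" and e2: "bld_agrees T H r2 s t f1"
    by (simp_all add: bld_agrees_Meet f1_def)
  have "es \<noteq> []" using Meet.prems(4,5) by auto
  with walk_in_Meet_cases Meet.prems consider "set es \<subseteq> set (vars r1)" | "set es \<subseteq> set (vars r2)"
    by blast
  then show ?case
  proof cases
    case 1 with Meet.IH(1)[OF e1] Meet.prems show ?thesis by simp
  next
    case 2 with Meet.IH(2)[OF e2] Meet.prems \<open>f \<le> f1\<close> show ?thesis by simp
  qed
next
  case (Join r1 r2)
  define f1 where "f1 = snd (bld r1 s f (Suc f))"
  define f2 where "f2 = snd (bld r2 f t f1)"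
  have "Suc f \<le> f1" unfolding f1_def by (rule bld_fresh_ge)
  from Join.prems(1) have e1: "bld_agrees T H r1 s f (Suc f)" and e2: "bld_agrees T H r2 f t f1"
    by (simp_all add: bld_agrees_Join f1_def)
  note ends1 = bld_agrees_ends[OF e1, folded f1_def] and ends2 = bld_agrees_ends[OF e2, folded f2_def]
  have "es \<noteq> []" using Join.prems(4,5) by auto
  from walk_in_Join_cases[OF Join.prems(1-5)] Join.prems(6)
  consider "set es \<subseteq> set (vars r1)" | "set es \<subseteq> set (vars r2)"
    | es1 es2 where "es = es1 @ es2" "set es1 \<subseteq> set (vars r1)" "set es2 \<subseteq> set (vars r2)"
        "walk T H s f es1" "walk T H f t es2"
    by blast
  then show ?case
  proof cases
    case 1
    then have "last es \<in> set (vars r1)" using \<open>es \<noteq> []\<close> by auto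
    with ends1 walk_last[OF Join.prems(5) \<open>es \<noteq> []\<close>] \<open>t < f\<close> show ?thesis by fastforce
  next
    case 2
    then have "hd es \<in> set (vars r2)" using \<open>es \<noteq> []\<close> by auto
    with ends2 walk_hd[OF Join.prems(5) \<open>es \<noteq> []\<close>] \<open>s < f\<close> \<open>Suc f \<le> f1\<close> show ?thesis by fastforce
  next
    case (3 es1 es2)
    from Join.IH(1)[OF e1 _ _ _ 3(4,2)] \<open>s < f\<close>
    have p1: "set es1 \<in> st_paths r1" "distinct (s # map H es1)" by auto
    from Join.IH(2)[OF e2 _ _ _ 3(5,3)] \<open>t < f\<close> \<open>Suc f \<le> f1\<close>
    have p2: "set es2 \<in> st_paths r2" "distinct (f # map H es2)" by auto
    have "set (s # map H es1) \<subseteq> {s, f} \<union> {Suc f..<f1}" using 3(2) ends1 by fastforce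
    moreover have "set (map H es2) \<subseteq> {t} \<union> {f1..<f2}" using 3(3) ends2 by fastforce
    ultimately have "set (s # map H es1) \<inter> set (map H es2) = {}"
      using \<open>s < f\<close> \<open>t < f\<close> \<open>s \<noteq> t\<close> \<open>Suc f \<le> f1\<close> by fastforce
    with p1 p2 3(1) show ?thesis by auto
  qed
qed

lemma walk_infix_ends:
  assumes "walk T H u v (x @ c @ y)" and "c \<noteq> []"
  shows "walk T H u (H (last c)) (x @ c)" and "walk T H (T (hd c)) v (c @ y)"
proof -
  from assms(1) obtain a b where "walk T H u a x" "walk T H a b c" "walk T H b v y"
    by (auto simp: walk_append)
  moreover from this(2) assms(2) have "a = T (hd c)" "b = H (last c)"
    by (auto dest: walk_hd walk_last)
  ultimately show "walk T H u (H (last c)) (x @ c)" and "walk T H (T (hd c)) v (c @ y)"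
    by (auto simp: walk_append)
qed

lemma st_walk_through:
  assumes "bld_agrees T H r s t f" "s < f" "t < f" "s \<noteq> t"
    and "walk T H u v c" "c \<noteq> []" "set c \<subseteq> set (vars r)"
  shows "\<exists>x y. walk T H s t (x @ c @ y) \<and> set x \<subseteq> set (vars r) \<and> set y \<subseteq> set (vars r)"
  using assms
proof (induction r arbitrary: s t f u v c)
  case (Var x)
  then obtain c' where c: "c = x # c'" and c': "walk T H t v c'" "set c' \<subseteq> {x}"
    and x: "T x = s" "H x = t"
    by (cases c) (auto simp: bld_agrees_Var)
  have "c' = []" using c' x \<open>s \<noteq> t\<close> by (cases c') auto
  with c x show ?case by (intro exI[of _ "[]"]) auto
next
  case (Meet r1 r2)
  define f1 where "f1 = snd (bld r1 s t f)"
  have "f \<le> f1" unfolding f1_def by (rule bld_fresh_ge)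
  from Meet.prems(1) have e1: "bld_agrees T H r1 s t f" and e2: "bld_agrees T H r2 s t f1"
    by (simp_all add: bld_agrees_Meet f1_def)
  from walk_in_Meet_cases Meet.prems consider "set c \<subseteq> set (vars r1)" | "set c \<subseteq> set (vars r2)"
    by blast
  then show ?case
  proof cases
    case 1 with Meet.IH(1)[OF e1] Meet.prems show ?thesis by fastforce
  next
    case 2 with Meet.IH(2)[OF e2] Meet.prems \<open>f \<le> f1\<close> show ?thesis by fastforce
  qed
next
  case (Join r1 r2)
  define f1 where "f1 = snd (bld r1 s f (Suc f))"
  have "Suc f \<le> f1" unfolding f1_def by (rule bld_fresh_ge)
  from Join.prems(1) have e1: "bld_agrees T H r1 s f (Suc f)" and e2: "bld_agrees T H r2 f t f1"
    by (simp_all add: bld_agrees_Join f1_def)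
  obtain w1 where w1: "walk T H s f w1" "set w1 \<subseteq> set (vars r1)"
    using st_walk_exists[OF e1] by blast
  obtain w2 where w2: "walk T H f t w2" "set w2 \<subseteq> set (vars r2)"
    using st_walk_exists[OF e2] by blast
  have in_r1: ?case if "set c \<subseteq> set (vars r1)"
  proof -
    from Join.IH(1)[OF e1 _ _ _ Join.prems(5,6) that] Join.prems(2) obtain x y where
      "walk T H s f (x @ c @ y)" "set x \<subseteq> set (vars r1)" "set y \<subseteq> set (vars r1)" by auto
    with w2 show ?thesis by (intro exI[of _ x] exI[of _ "y @ w2"]) (auto simp: walk_append)
  qed
  have in_r2: ?case if "set c \<subseteq> set (vars r2)"
  proof -
    from Join.IH(2)[OF e2 _ _ _ Join.prems(5,6) that] Join.prems(3) \<open>Suc f \<le> f1\<close> obtain x y where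
      "walk T H f t (x @ c @ y)" "set x \<subseteq> set (vars r2)" "set y \<subseteq> set (vars r2)" by auto
    with w1 show ?thesis by (intro exI[of _ "w1 @ x"] exI[of _ y]) (auto simp: walk_append)
  qed
  from walk_in_Join_cases[OF Join.prems(1-5)] Join.prems(7)
  consider "set c \<subseteq> set (vars r1)" | "set c \<subseteq> set (vars r2)"
    | c1 c2 where "c = c1 @ c2" "set c1 \<subseteq> set (vars r1)" "set c2 \<subseteq> set (vars r2)"
        "walk T H u f c1" "walk T H f v c2"
    by blast
  then show ?case
  proof cases
    case (3 c1 c2)
    show ?thesis
    proof (cases "c1 = [] \<or> c2 = []")
      case True with 3 in_r1 in_r2 show ?thesis by auto
    next
      case False
      from Join.IH(1)[OF e1 _ _ _ 3(4) _ 3(2)] False Join.prems(2) obtain x y where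
        x: "walk T H s f (x @ c1 @ y)" "set x \<subseteq> set (vars r1)" by auto
      from Join.IH(2)[OF e2 _ _ _ 3(5) _ 3(3)] False Join.prems(3) \<open>Suc f \<le> f1\<close> obtain x' y' where
        y': "walk T H f t (x' @ c2 @ y')" "set y' \<subseteq> set (vars r2)" by auto
      have "walk T H s f (x @ c1)"
        using walk_infix_ends(1)[OF x(1)] walk_last[OF 3(4)] False by simp
      moreover have "walk T H f t (c2 @ y')"
        using walk_infix_ends(2)[OF y'(1)] walk_hd[OF 3(5)] False by simp
      ultimately show ?thesis
        using 3(1) x(2) y'(2) by (intro exI[of _ x] exI[of _ y']) (auto simp: walk_append)
    qed
  qed (use in_r1 in_r2 in auto)
qed

lemma graph_edge_ends:
  assumes "distinct (vars r)" and "x \<in> set (vars r)"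
  shows "(etail r x = 0 \<or> 2 \<le> etail r x) \<and> etail r x < gnv r \<and>
    (ehead r x = 1 \<or> 2 \<le> ehead r x) \<and> ehead r x < gnv r"
  using bld_agrees_ends[OF bld_agrees_graph[OF assms(1)] assms(2)] bld_fresh_ge[of 2 r 0 1]
  by (auto simp: gnv_def)

lemma dpath_iff_walk:
  "dpath r es \<longleftrightarrow> es \<noteq> [] \<and> set es \<subseteq> set (vars r) \<and>
     walk (etail r) (ehead r) (etail r (hd es)) (ehead r (last es)) es \<and>
     distinct (etail r (hd es) # map (ehead r) es)"
  unfolding dpath_def by (auto simp: walk_iff_chain distinct_map)

lemma maxpath_if_st_walk:
  assumes q: "distinct (vars q)"
    and walk: "walk (etail q) (ehead q) 0 1 es" and es: "set es \<subseteq> set (vars q)"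
  shows "maxpath q es"
proof -
  let ?T = "etail q" and ?H = "ehead q"
  have "es \<noteq> []" using walk by auto
  have "distinct (0 # map ?H es)"
    using st_path_if_walk[OF bld_agrees_graph[OF q] _ _ _ walk es] by simp
  moreover have ends: "?T (hd es) = 0" "?H (last es) = 1"
    using walk_hd[OF walk] walk_last[OF walk] \<open>es \<noteq> []\<close> by simp_all
  ultimately have "dpath q es"
    using walk es \<open>es \<noteq> []\<close> by (simp add: dpath_iff_walk)
  moreover have "es' = es" if "dpath q es'" "sublist es es'" for es'
  proof -
    from that(2) obtain xs ys where es': "es' = xs @ es @ ys" by (auto simp: sublist_def)
    from that(1) have sub: "set es' \<subseteq> set (vars q)"
      and "walk ?T ?H (?T (hd es')) (?H (last es')) es'" by (simp_all add: dpath_iff_walk)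
    with es' obtain a b where xs: "walk ?T ?H (?T (hd es')) a xs" and "walk ?T ?H a b es"
      and ys: "walk ?T ?H b (?H (last es')) ys"
      by (auto simp: walk_append)
    with ends \<open>es \<noteq> []\<close> have "a = 0" "b = 1" by (auto dest: walk_hd walk_last)
    have "xs = []"
    proof (rule ccontr)
      assume "xs \<noteq> []"
      with xs \<open>a = 0\<close> have "?H (last xs) = 0" "last xs \<in> set (vars q)"
        using es' sub by (auto dest: walk_last)
      with graph_edge_ends[OF q] show False by fastforce
    qed
    moreover have "ys = []"
    proof (rule ccontr)
      assume "ys \<noteq> []"
      with ys \<open>b = 1\<close> have "?T (hd ys) = 1" "hd ys \<in> set (vars q)"
        using es' sub by (auto dest: walk_hd)
      with graph_edge_ends[OF q] show False by fastforce
    qed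
    ultimately show ?thesis using es' by simp
  qed
  ultimately show ?thesis by (auto simp: maxpath_def)
qed

lemma maxpath_iff_st_walk:
  assumes q: "distinct (vars q)"
  shows "maxpath q es \<longleftrightarrow> walk (etail q) (ehead q) 0 1 es \<and> set es \<subseteq> set (vars q)"
proof
  assume max: "maxpath q es"
  then have ne: "es \<noteq> []" and sub: "set es \<subseteq> set (vars q)"
    and walk: "walk (etail q) (ehead q) (etail q (hd es)) (ehead q (last es)) es"
    by (auto simp: maxpath_def dpath_iff_walk)
  obtain x y where "walk (etail q) (ehead q) 0 1 (x @ es @ y)" "set (x @ es @ y) \<subseteq> set (vars q)"
    using st_walk_through[OF bld_agrees_graph[OF q] _ _ _ walk ne sub] sub by auto
  moreover from this have "x @ es @ y = es"
    using max maxpath_if_st_walk[OF q] by (auto simp: maxpath_def)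
  ultimately show "walk (etail q) (ehead q) 0 1 es \<and> set es \<subseteq> set (vars q)" by simp
qed (use maxpath_if_st_walk[OF q] in blast)

lemma maxpath_edge_sets:
  assumes q: "distinct (vars q)"
  shows "(\<exists>es. maxpath q es \<and> set es = X) \<longleftrightarrow> X \<in> st_paths q"
proof
  assume "\<exists>es. maxpath q es \<and> set es = X"
  then obtain es where "walk (etail q) (ehead q) 0 1 es" "set es \<subseteq> set (vars q)" "set es = X"
    using maxpath_iff_st_walk[OF q] by blast
  with st_path_if_walk[OF bld_agrees_graph[OF q]] show "X \<in> st_paths q" by auto
next
  assume X: "X \<in> st_paths q"
  then obtain es where "walk (etail q) (ehead q) 0 1 es" "set es = X"
    using walk_if_st_path[OF bld_agrees_graph[OF q]] by blast
  with st_paths_subset_vars[OF X] maxpath_iff_st_walk[OF q] show "\<exists>es. maxpath q es \<and> set es = X"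
    by blast
qed

text \<open>The additive group of a module as a HOL-Algebra structure; its multiplicative fields
  are unused.\<close>
definition additive_group :: "'m set \<Rightarrow> ('m \<Rightarrow> 'm \<Rightarrow> 'm) \<Rightarrow> 'm \<Rightarrow> 'm ring" where
  "additive_group M madd z = \<lparr>carrier = M, mult = madd, one = z, zero = z, add = madd\<rparr>"

locale lmodule =
  fixes M :: "'m set" and madd :: "'m \<Rightarrow> 'm \<Rightarrow> 'm" and z :: 'm and sm :: "'a::ring_1 \<Rightarrow> 'm \<Rightarrow> 'm"
  assumes left_module: "left_module M madd z sm"

sublocale lmodule \<subseteq> abelian_group "additive_group M madd z"
  rewrites "carrier (additive_group M madd z) = M"
    and "add (additive_group M madd z) = madd"
    and "zero (additive_group M madd z) = z"
proof -
  show "abelian_group (additive_group M madd z)"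
    by (rule abelian_groupI)
      (use left_module in \<open>auto simp: left_module_def additive_group_def\<close>)
qed (simp_all add: additive_group_def)

context lmodule
begin

abbreviation msum :: "('b \<Rightarrow> 'm) \<Rightarrow> 'b set \<Rightarrow> 'm" where
  "msum f A \<equiv> finsum (additive_group M madd z) f A"

lemma madd_left_cancel [simp]: "x \<in> M \<Longrightarrow> y \<in> M \<Longrightarrow> y' \<in> M \<Longrightarrow> madd x y = madd x y' \<longleftrightarrow> y = y'"
  using add.right_cancel a_comm by metis

lemma sm_closed: "x \<in> M \<Longrightarrow> sm r x \<in> M"
  using left_module by (simp add: left_module_def)

lemma sm_add_right: "x \<in> M \<Longrightarrow> y \<in> M \<Longrightarrow> sm r (madd x y) = madd (sm r x) (sm r y)"
  using left_module by (simp add: left_module_def)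

lemma sm_add_left: "x \<in> M \<Longrightarrow> sm (r + s) x = madd (sm r x) (sm s x)"
  using left_module by (simp add: left_module_def)

lemma sm_one: "x \<in> M \<Longrightarrow> sm 1 x = x"
  using left_module by (simp add: left_module_def)

lemma sm_zero_left: "x \<in> M \<Longrightarrow> sm 0 x = z"
  using sm_add_left[of x 0 0] sm_closed[of x 0] by (simp add: add.l_cancel_one')

lemma sm_sum_left: "x \<in> M \<Longrightarrow> sm (\<Sum>i\<in>A. r i) x = msum (\<lambda>i. sm (r i) x) A"
proof (induction A rule: infinite_finite_induct)
  case (insert i A)
  then show ?case by (simp add: sm_add_left sm_closed Pi_def)
qed (simp_all add: sm_zero_left)

lemma submodule_closed: "submodule M madd z sm S \<Longrightarrow> x \<in> S \<Longrightarrow> x \<in> M"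
  unfolding submodule_def by blast

lemma lev_closed:
  "\<forall>i\<in>set (vars r). submodule M madd z sm (B i) \<Longrightarrow> u \<in> lev madd B r \<Longrightarrow> u \<in> M"
  by (induction r arbitrary: u) (auto dest: submodule_closed)

lemma potential_of_lev:
  assumes "bld_agrees T H r s t f" "s < f" "t < f" "s \<noteq> t"
    and B: "\<forall>i\<in>set (vars r). submodule M madd z sm (B i)"
    and "u \<in> lev madd B r" "w0 \<in> M"
  shows "\<exists>w. (\<forall>v. w v \<in> M) \<and> w s = w0 \<and> w t = madd w0 u \<and>
    (\<forall>i\<in>set (vars r). \<exists>c\<in>B i. w (H i) = madd (w (T i)) c)"
  using assms
proof (induction r arbitrary: s t f u w0)
  case (Var x)
  then have "u \<in> M" "T x = s" "H x = t" by (auto dest: submodule_closed simp: bld_agrees_Var)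
  with Var show ?case
    by (intro exI[of _ "\<lambda>v. if v = t then madd w0 u else w0"]) auto
next
  case (Join r1 r2)
  define f1 where "f1 = snd (bld r1 s f (Suc f))"
  define f2 where "f2 = snd (bld r2 f t f1)"
  have "Suc f \<le> f1" unfolding f1_def by (rule bld_fresh_ge)
  from Join.prems(1) have e1: "bld_agrees T H r1 s f (Suc f)" and e2: "bld_agrees T H r2 f t f1"
    by (simp_all add: bld_agrees_Join f1_def)
  note ends1 = bld_agrees_ends[OF e1, folded f1_def] and ends2 = bld_agrees_ends[OF e2, folded f2_def]
  from Join.prems(6) obtain x y where u: "u = madd x y"
    and x: "x \<in> lev madd B r1" and y: "y \<in> lev madd B r2" by auto
  have "x \<in> M" "y \<in> M" using x y Join.prems(5) by (auto intro: lev_closed)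
  obtain w1 where w1: "\<forall>v. w1 v \<in> M" "w1 s = w0" "w1 f = madd w0 x"
    "\<forall>i\<in>set (vars r1). \<exists>c\<in>B i. w1 (H i) = madd (w1 (T i)) c"
    using Join.IH(1)[OF e1 _ _ _ _ x Join.prems(7)] Join.prems(2,5) by auto
  obtain w2 where w2: "\<forall>v. w2 v \<in> M" "w2 f = madd w0 x" "w2 t = madd (madd w0 x) y"
    "\<forall>i\<in>set (vars r2). \<exists>c\<in>B i. w2 (H i) = madd (w2 (T i)) c"
    using Join.IH(2)[OF e2 _ _ _ _ y a_closed[OF Join.prems(7) \<open>x \<in> M\<close>]] Join.prems(3,5)
      \<open>Suc f \<le> f1\<close> by auto
  define w where "w v = (if v = f \<or> v = t \<or> f1 \<le> v \<and> v < f2 then w2 v else w1 v)" for v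
  have on1: "w v = w1 v" if "v = s \<or> v = f \<or> Suc f \<le> v \<and> v < f1" for v
    using that Join.prems(2-4) \<open>Suc f \<le> f1\<close> w1(3) w2(2) unfolding w_def by auto
  have on2: "w v = w2 v" if "v = f \<or> v = t \<or> f1 \<le> v \<and> v < f2" for v
    using that unfolding w_def by auto
  have "\<exists>c\<in>B i. w (H i) = madd (w (T i)) c" if "i \<in> set (vars (Join r1 r2))" for i
  proof (cases "i \<in> set (vars r1)")
    case True with w1(4) ends1[OF True] on1 show ?thesis by fastforce
  next
    case False with that w2(4) ends2 on2 show ?thesis by fastforce
  qed
  moreover have "w t = madd w0 u"
    using on2[of t] w2(3) u Join.prems(7) \<open>x \<in> M\<close> \<open>y \<in> M\<close> by (simp add: a_assoc)
  moreover have "w s = w0" using on1[of s] w1(2) by simp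
  moreover have "\<forall>v. w v \<in> M" using w1(1) w2(1) by (simp add: w_def)
  ultimately show ?case by blast
next
  case (Meet r1 r2)
  define f1 where "f1 = snd (bld r1 s t f)"
  define f2 where "f2 = snd (bld r2 s t f1)"
  have "f \<le> f1" unfolding f1_def by (rule bld_fresh_ge)
  from Meet.prems(1) have e1: "bld_agrees T H r1 s t f" and e2: "bld_agrees T H r2 s t f1"
    by (simp_all add: bld_agrees_Meet f1_def)
  note ends1 = bld_agrees_ends[OF e1, folded f1_def] and ends2 = bld_agrees_ends[OF e2, folded f2_def]
  from Meet.prems(6) have u1: "u \<in> lev madd B r1" and u2: "u \<in> lev madd B r2" by auto
  obtain w1 where w1: "\<forall>v. w1 v \<in> M" "w1 s = w0" "w1 t = madd w0 u"
    "\<forall>i\<in>set (vars r1). \<exists>c\<in>B i. w1 (H i) = madd (w1 (T i)) c"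
    using Meet.IH(1)[OF e1 _ _ _ _ u1 Meet.prems(7)] Meet.prems(2-5) by auto
  obtain w2 where w2: "\<forall>v. w2 v \<in> M" "w2 s = w0" "w2 t = madd w0 u"
    "\<forall>i\<in>set (vars r2). \<exists>c\<in>B i. w2 (H i) = madd (w2 (T i)) c"
    using Meet.IH(2)[OF e2 _ _ _ _ u2 Meet.prems(7)] Meet.prems(2-5) \<open>f \<le> f1\<close> by auto
  define w where "w v = (if f1 \<le> v \<and> v < f2 then w2 v else w1 v)" for v
  have on1: "w v = w1 v" if "v = s \<or> v = t \<or> f \<le> v \<and> v < f1" for v
    using that Meet.prems(2,3) \<open>f \<le> f1\<close> unfolding w_def by auto
  have on2: "w v = w2 v" if "v = s \<or> v = t \<or> f1 \<le> v \<and> v < f2" for v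
    using that on1 w1 w2 unfolding w_def by auto
  have "\<exists>c\<in>B i. w (H i) = madd (w (T i)) c" if "i \<in> set (vars (Meet r1 r2))" for i
  proof (cases "i \<in> set (vars r1)")
    case True with w1(4) ends1[OF True] on1 show ?thesis by fastforce
  next
    case False with that w2(4) ends2 on2 show ?thesis by fastforce
  qed
  moreover have "w s = w0" "w t = madd w0 u" using on1[of s] on1[of t] w1(2,3) by simp_all
  moreover have "\<forall>v. w v \<in> M" using w1(1) w2(1) by (simp add: w_def)
  ultimately show ?case by blast
qed

lemma msum_regroup:
  assumes "finite X" "finite V" "h ` X \<subseteq> V" "\<forall>v\<in>V. g v \<in> M"
  shows "msum (\<lambda>i. sm (a i) (g (h i))) X = msum (\<lambda>v. sm (\<Sum>i\<in>{i\<in>X. h i = v}. a i) (g v)) V"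
proof -
  have "msum (\<lambda>v. sm (\<Sum>i\<in>{i\<in>X. h i = v}. a i) (g v)) V =
      msum (\<lambda>v. msum (\<lambda>i. sm (a i) (g (h i))) {i\<in>X. h i = v}) V"
    using assms(4) by (intro finsum_cong') (auto simp: sm_sum_left sm_closed Pi_def intro!: finsum_cong')
  also have "\<dots> = msum (\<lambda>i. sm (a i) (g (h i))) (\<Union>v\<in>V. {i\<in>X. h i = v})"
    using assms by (intro add.finprod_UN_disjoint[symmetric])
      (auto simp: pairwise_def disjnt_def intro: sm_closed)
  also have "(\<Union>v\<in>V. {i\<in>X. h i = v}) = X" using assms(3) by auto
  finally show ?thesis ..
qed

lemma msum_boundary:
  assumes "finite V" "s \<in> V" "t \<in> V" "s \<noteq> t" "\<forall>v\<in>V. g v \<in> M"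
  shows "msum (\<lambda>v. sm (if v = s then - b else if v = t then b else 0) (g v)) V =
    madd (sm (- b) (g s)) (sm b (g t))"
proof -
  let ?F = "\<lambda>v. sm (if v = s then - b else if v = t then b else 0) (g v)"
  have V: "V = insert s (insert t (V - {s, t}))" using assms(2,3) by auto
  have "msum ?F (V - {s, t}) = z"
    using assms(5) by (intro add.finprod_one_eqI) (simp add: sm_zero_left)
  moreover have "?F \<in> V \<rightarrow> M" using assms(5) by (simp add: sm_closed)
  ultimately show ?thesis
    using assms by (subst V) (simp add: Pi_def sm_closed)
qed

text \<open>Summation by parts: regrouping \<open>\<Sum> a\<^sub>i w(H i)\<close> and \<open>\<Sum> a\<^sub>i w(T i)\<close> by vertex, the flow
  condition leaves only the terms at \<open>s\<close> and \<open>t\<close>.\<close>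
lemma flow_sum_telescopes:
  assumes fin: "finite V" "finite X" and ends: "T ` X \<subseteq> V" "H ` X \<subseteq> V"
    and st: "s \<in> V" "t \<in> V" "s \<noteq> t"
    and flow: "\<forall>v\<in>V. (\<Sum>i\<in>{i\<in>X. H i = v}. a i) - (\<Sum>i\<in>{i\<in>X. T i = v}. a i) =
      (if v = s then - b else if v = t then b else 0)"
    and w: "\<forall>v\<in>V. w v \<in> M" and c: "\<forall>i\<in>X. c i \<in> M \<and> w (H i) = madd (w (T i)) (c i)"
  shows "madd (sm b (w s)) (msum (\<lambda>i. sm (a i) (c i)) X) = sm b (w t)"
proof -
  let ?tr = "\<lambda>v. if v = s then - b else if v = t then b else 0"
  let ?out = "\<lambda>v. \<Sum>i\<in>{i\<in>X. T i = v}. a i"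
  define S where "S = msum (\<lambda>i. sm (a i) (w (T i))) X"
  define C where "C = msum (\<lambda>i. sm (a i) (c i)) X"
  have wT: "w (T i) \<in> M" "w (H i) \<in> M" if "i \<in> X" for i using that ends w by auto
  have split_in: "(\<Sum>i\<in>{i\<in>X. H i = v}. a i) = ?out v + ?tr v" if "v \<in> V" for v
  proof -
    from flow that have "(\<Sum>i\<in>{i\<in>X. H i = v}. a i) - ?out v = ?tr v" by blast
    then show ?thesis by (simp add: diff_eq_eq add.commute)
  qed
  have SM: "S \<in> M" "C \<in> M" using wT c by (auto simp: S_def C_def Pi_def sm_closed)
  have "msum (\<lambda>i. sm (a i) (w (H i))) X = msum (\<lambda>i. madd (sm (a i) (w (T i))) (sm (a i) (c i))) X"
    using wT c by (intro finsum_cong') (auto simp: Pi_def sm_closed sm_add_right)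
  also have "\<dots> = madd S C"
    unfolding S_def C_def using wT c by (intro finsum_addf) (auto simp: Pi_def sm_closed)
  finally have H_side: "msum (\<lambda>i. sm (a i) (w (H i))) X = madd S C" .
  have "msum (\<lambda>i. sm (a i) (w (H i))) X = msum (\<lambda>v. sm (\<Sum>i\<in>{i\<in>X. H i = v}. a i) (w v)) V"
    using fin(2,1) ends(2) w by (rule msum_regroup)
  also have "\<dots> = msum (\<lambda>v. madd (sm (?out v) (w v)) (sm (?tr v) (w v))) V"
    using w by (intro finsum_cong') (auto simp: Pi_def sm_closed split_in sm_add_left)
  also have "\<dots> = madd (msum (\<lambda>v. sm (?out v) (w v)) V) (msum (\<lambda>v. sm (?tr v) (w v)) V)"
    using w by (intro finsum_addf) (auto simp: Pi_def sm_closed)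
  also have "msum (\<lambda>v. sm (?out v) (w v)) V = S"
    unfolding S_def using fin(2,1) ends(1) w by (rule msum_regroup[symmetric])
  also have "msum (\<lambda>v. sm (?tr v) (w v)) V = madd (sm (- b) (w s)) (sm b (w t))"
    using fin(1) st w by (rule msum_boundary)
  finally have "C = madd (sm (- b) (w s)) (sm b (w t))"
    using H_side SM st w by (simp add: sm_closed)
  then have "madd (sm b (w s)) C = madd (madd (sm b (w s)) (sm (- b) (w s))) (sm b (w t))"
    using st w by (simp add: sm_closed a_assoc)
  also have "madd (sm b (w s)) (sm (- b) (w s)) = z"
    using st w sm_add_left[of "w s" b "- b"] by (simp add: sm_zero_left)
  finally show ?thesis using st w by (simp add: C_def sm_closed)
qed

lemma lev_if_path_sums:
  assumes "distinct (vars r)" and B: "\<forall>i\<in>set (vars r). submodule M madd z sm (B i)"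
    and d: "\<forall>j\<in>set (vars r). d j \<in> B j" and sums: "\<forall>A\<in>st_paths r. msum d A = u"
  shows "u \<in> lev madd B r"
  using assms
proof (induction r arbitrary: u)
  case (Var x)
  then have "d x \<in> M" by (auto dest: submodule_closed)
  with Var show ?case by auto
next
  case (Join r1 r2)
  have dM: "d j \<in> M" if "j \<in> set (vars (Join r1 r2))" for j
    using that Join.prems(2,3) by (auto dest: submodule_closed)
  have sum_Un: "msum d (A1 \<union> A2) = madd (msum d A1) (msum d A2)"
    if "A1 \<in> st_paths r1" "A2 \<in> st_paths r2" for A1 A2
    using st_paths_subset_vars[OF that(1)] st_paths_subset_vars[OF that(2)] Join.prems(1) dM
    by (intro finsum_Un_disjoint) (auto simp: Pi_def intro: finite_subset)
  have sum_M: "msum d A \<in> M" if "A \<in> st_paths r1 \<or> A \<in> st_paths r2" for A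
    using that st_paths_subset_vars dM by (auto simp: Pi_def intro!: finsum_closed)
  obtain A1 A2 where A1: "A1 \<in> st_paths r1" and A2: "A2 \<in> st_paths r2"
    using st_paths_nonempty by blast
  have u: "u = madd (msum d A1') (msum d A2')"
    if "A1' \<in> st_paths r1" "A2' \<in> st_paths r2" for A1' A2'
  proof -
    have "A1' \<union> A2' \<in> st_paths (Join r1 r2)" using that by auto
    with Join.prems(4) sum_Un[OF that] show ?thesis by simp
  qed
  define x y where "x = msum d A1" and "y = msum d A2"
  have x: "x \<in> M" and y: "y \<in> M" using sum_M A1 A2 by (simp_all add: x_def y_def)
  have "msum d A = x" if "A \<in> st_paths r1" for A
  proof -
    have "madd (msum d A) y = madd x y" using u[OF that A2] u[OF A1 A2] by (simp add: x_def y_def)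
    with sum_M[of A] that x y show ?thesis by simp
  qed
  then have "x \<in> lev madd B r1" using Join.IH(1)[of x] Join.prems by auto
  moreover have "msum d A = y" if "A \<in> st_paths r2" for A
  proof -
    have "madd x (msum d A) = madd x y" using u[OF A1 that] u[OF A1 A2] by (simp add: x_def y_def)
    with sum_M[of A] that x y show ?thesis by simp
  qed
  then have "y \<in> lev madd B r2" using Join.IH(2)[of y] Join.prems by auto
  ultimately show ?case using u[OF A1 A2] by (auto simp: x_def y_def)
next
  case (Meet r1 r2)
  then show ?case by auto
qed

lemma holds_if_solvable:
  assumes bal: "balanced_in p q n" and "problem_solvable p q (1::'a)"
  shows "holds_in_module p q n M madd z sm"
  unfolding holds_in_module_def
proof (intro allI impI subsetI)
  let ?T = "etail p" and ?H = "ehead p"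
  fix B u assume B: "\<forall>i\<in>{1..n}. submodule M madd z sm (B i)" and u: "u \<in> lev madd B p"
  from bal have dp: "distinct (vars p)" and dq: "distinct (vars q)"
    and vars: "set (vars p) = {1..n}" "set (vars q) = {1..n}"
    by (auto simp: balanced_in_def)
  from assms(2) obtain a where a: "is_solution p q (1::'a) a" by (auto simp: problem_solvable_def)
  obtain w where w: "\<forall>v. w v \<in> M" "w 0 = z" "w 1 = madd z u"
    and rise: "\<forall>i\<in>set (vars p). \<exists>c\<in>B i. w (?H i) = madd (w (?T i)) c"
    using potential_of_lev[OF bld_agrees_graph[OF dp] _ _ _ _ u zero_closed] B vars by auto
  then obtain c where c: "\<forall>i\<in>set (vars p). c i \<in> B i \<and> w (?H i) = madd (w (?T i)) (c i)"
    by metis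
  have cM: "c i \<in> M" if "i \<in> set (vars p)" for i
    using c B vars that submodule_closed by blast
  have "msum (\<lambda>j. sm (a j) (c j)) A = u" if A: "A \<in> st_paths q" for A
  proof -
    have A_sub: "A \<subseteq> set (vars p)" using st_paths_subset_vars[OF A] vars by simp
    from A a maxpath_edge_sets[OF dq] have "\<forall>v<gnv p. Eff p a A v = Tr 1 v"
      by (auto simp: is_solution_def)
    then have flow: "\<forall>v\<in>{..<gnv p}. (\<Sum>i\<in>{i\<in>A. ?H i = v}. a i) - (\<Sum>i\<in>{i\<in>A. ?T i = v}. a i) =
        (if v = 0 then - 1 else if v = 1 then 1 else 0)"
      by (simp add: Eff_def Tr_def gsrc_def gsnk_def)
    have "1 < gnv p" using bld_fresh_ge[of 2 p 0 1] by (simp add: gnv_def)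
    have "?T ` A \<subseteq> {..<gnv p}" "?H ` A \<subseteq> {..<gnv p}"
      using graph_edge_ends[OF dp] A_sub by auto
    then have "madd (sm 1 (w 0)) (msum (\<lambda>j. sm (a j) (c j)) A) = sm 1 (w 1)"
      using flow_sum_telescopes[OF _ _ _ _ _ _ _ flow] \<open>1 < gnv p\<close> w(1) c cM A_sub
        finite_subset[OF A_sub]
      by (auto simp: subset_iff)
    moreover have "msum (\<lambda>j. sm (a j) (c j)) A \<in> M"
      using cM A_sub by (intro finsum_closed) (auto simp: Pi_def sm_closed)
    ultimately show ?thesis
      using w u lev_closed[of p B] B vars by (simp add: sm_one)
  qed
  moreover have "\<forall>j\<in>set (vars q). sm (a j) (c j) \<in> B j"
    using c B vars by (auto simp: submodule_def)
  ultimately show "u \<in> lev madd B q"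
    using lev_if_path_sums[OF dq] B vars by auto
qed

end

definition edge_boundary :: "nat \<Rightarrow> nat \<Rightarrow> nat \<Rightarrow> 'a::ring_1" where
  "edge_boundary s t v = of_bool (v = t) - of_bool (v = s)"

lemma left_module_functions:
  "left_module (UNIV :: ('b \<Rightarrow> 'a::ring_1) set) (\<lambda>x y v. x v + y v) (\<lambda>v. 0) (\<lambda>r x v. r * x v)"
  unfolding left_module_def
proof (intro conjI ballI allI)
  fix x :: "'b \<Rightarrow> 'a"
  show "\<exists>y\<in>UNIV. (\<lambda>v. x v + y v) = (\<lambda>v. 0)" by (intro bexI[of _ "\<lambda>v. - x v"]) auto
qed (auto simp: algebra_simps)

lemma submodule_cyclic:
  "submodule (UNIV :: ('b \<Rightarrow> 'a::ring_1) set) (\<lambda>x y v. x v + y v) (\<lambda>v. 0) (\<lambda>r x v. r * x v)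
     (range (\<lambda>c v. c * g v))"
  unfolding submodule_def
proof (intro conjI ballI allI)
  show "(\<lambda>v. 0) \<in> range (\<lambda>c v. c * g v)" by (auto intro: range_eqI[of _ _ 0])
next
  fix x y assume "x \<in> range (\<lambda>c v. c * g v)" "y \<in> range (\<lambda>c v. c * g v)"
  then obtain c c' where "x = (\<lambda>v. c * g v)" "y = (\<lambda>v. c' * g v)" by auto
  then show "(\<lambda>v. x v + y v) \<in> range (\<lambda>c v. c * g v)"
    by (intro range_eqI[of _ _ "c + c'"]) (simp add: distrib_right)
next
  fix r x assume "x \<in> range (\<lambda>c v. c * g v)"
  then obtain c where "x = (\<lambda>v. c * g v)" by auto
  then show "(\<lambda>v. r * x v) \<in> range (\<lambda>c v. c * g v)"
    by (intro range_eqI[of _ _ "r * c"]) (simp add: mult.assoc)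
qed simp

lemma edge_boundary_in_lev:
  "bld_agrees T H r s t f \<Longrightarrow>
   edge_boundary s t \<in> lev (\<lambda>x y v. x v + y v) (\<lambda>i. range (\<lambda>c v. c * edge_boundary (T i) (H i) v)) r"
proof (induction r arbitrary: s t f)
  case (Var x)
  then show ?case by (auto simp: bld_agrees_Var intro: range_eqI[of _ _ 1])
next
  case (Join r1 r2)
  have "edge_boundary s t = (\<lambda>v. edge_boundary s f v + edge_boundary f t v)"
    by (auto simp: edge_boundary_def)
  moreover from Join.prems have "bld_agrees T H r1 s f (Suc f)"
    and "bld_agrees T H r2 f t (snd (bld r1 s f (Suc f)))" by (simp_all add: bld_agrees_Join)
  ultimately show ?case using Join.IH unfolding lev.simps by blast
next
  case (Meet r1 r2)
  then show ?case by (auto simp: bld_agrees_Meet)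
qed

lemma path_sums_if_lev:
  fixes u :: "'b \<Rightarrow> 'a::comm_monoid_add"
  assumes "distinct (vars r)" and "u \<in> lev (\<lambda>x y v. x v + y v) B r"
  shows "\<exists>d. (\<forall>j\<in>set (vars r). d j \<in> B j) \<and> (\<forall>A\<in>st_paths r. \<forall>v. (\<Sum>j\<in>A. d j v) = u v)"
  using assms
proof (induction r arbitrary: u)
  case (Var x)
  then show ?case by (intro exI[of _ "\<lambda>_. u"]) auto
next
  case (Join r1 r2)
  from Join.prems obtain x y where u: "u = (\<lambda>v. x v + y v)"
    and x: "x \<in> lev (\<lambda>x y v. x v + y v) B r1" and y: "y \<in> lev (\<lambda>x y v. x v + y v) B r2"
    by auto
  from Join.IH(1)[OF _ x] Join.prems obtain d1 where d1: "\<forall>j\<in>set (vars r1). d1 j \<in> B j"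
    "\<forall>A\<in>st_paths r1. \<forall>v. (\<Sum>j\<in>A. d1 j v) = x v" by auto
  from Join.IH(2)[OF _ y] Join.prems obtain d2 where d2: "\<forall>j\<in>set (vars r2). d2 j \<in> B j"
    "\<forall>A\<in>st_paths r2. \<forall>v. (\<Sum>j\<in>A. d2 j v) = y v" by auto
  have disj: "set (vars r1) \<inter> set (vars r2) = {}" using Join.prems(1) by simp
  define d where "d i = (if i \<in> set (vars r1) then d1 i else d2 i)" for i
  have "(\<Sum>j\<in>A1 \<union> A2. d j v) = x v + y v" if "A1 \<in> st_paths r1" "A2 \<in> st_paths r2" for A1 A2 v
  proof -
    have A: "A1 \<subseteq> set (vars r1)" "A2 \<subseteq> set (vars r2)" using that st_paths_subset_vars by auto
    then have "(\<Sum>j\<in>A1 \<union> A2. d j v) = (\<Sum>j\<in>A1. d j v) + (\<Sum>j\<in>A2. d j v)"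
      using disj by (intro sum.union_disjoint) (auto intro: finite_subset)
    also have "(\<Sum>j\<in>A1. d j v) = (\<Sum>j\<in>A1. d1 j v)" using A by (intro sum.cong) (auto simp: d_def)
    also have "(\<Sum>j\<in>A2. d j v) = (\<Sum>j\<in>A2. d2 j v)" using A disj by (intro sum.cong) (auto simp: d_def)
    finally show ?thesis using d1 d2 that by simp
  qed
  with d1 d2 disj u show ?case by (intro exI[of _ d]) (auto simp: d_def)
next
  case (Meet r1 r2)
  from Meet.prems have x: "u \<in> lev (\<lambda>x y v. x v + y v) B r1" and y: "u \<in> lev (\<lambda>x y v. x v + y v) B r2"
    by auto
  from Meet.IH(1)[OF _ x] Meet.prems obtain d1 where d1: "\<forall>j\<in>set (vars r1). d1 j \<in> B j"
    "\<forall>A\<in>st_paths r1. \<forall>v. (\<Sum>j\<in>A. d1 j v) = u v" by auto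
  from Meet.IH(2)[OF _ y] Meet.prems obtain d2 where d2: "\<forall>j\<in>set (vars r2). d2 j \<in> B j"
    "\<forall>A\<in>st_paths r2. \<forall>v. (\<Sum>j\<in>A. d2 j v) = u v" by auto
  have disj: "set (vars r1) \<inter> set (vars r2) = {}" using Meet.prems(1) by simp
  define d where "d i = (if i \<in> set (vars r1) then d1 i else d2 i)" for i
  have "(\<Sum>j\<in>A. d j v) = u v" if "A \<in> st_paths r1" for A v
  proof -
    have "(\<Sum>j\<in>A. d j v) = (\<Sum>j\<in>A. d1 j v)"
      using st_paths_subset_vars[OF that] by (intro sum.cong) (auto simp: d_def)
    with d1(2) that show ?thesis by simp
  qed
  moreover have "(\<Sum>j\<in>A. d j v) = u v" if "A \<in> st_paths r2" for A v
  proof -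
    have "(\<Sum>j\<in>A. d j v) = (\<Sum>j\<in>A. d2 j v)"
      using st_paths_subset_vars[OF that] disj by (intro sum.cong) (auto simp: d_def)
    with d2(2) that show ?thesis by simp
  qed
  ultimately show ?case using d1(1) d2(1) by (intro exI[of _ d]) (auto simp: d_def)
qed

lemma solvable_if_holds_in_function_module:
  assumes bal: "balanced_in p q n"
    and holds: "holds_in_module p q n (UNIV :: (nat \<Rightarrow> 'a::ring_1) set)
      (\<lambda>x y v. x v + y v) (\<lambda>v. 0) (\<lambda>r x v. r * x v)"
  shows "problem_solvable p q (1::'a)"
proof -
  let ?T = "etail p" and ?H = "ehead p"
  from bal have dp: "distinct (vars p)" and dq: "distinct (vars q)"
    and vars: "set (vars p) = {1..n}" "set (vars q) = {1..n}"
    by (auto simp: balanced_in_def)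
  define B :: "nat \<Rightarrow> (nat \<Rightarrow> 'a) set"
    where "B = (\<lambda>i. range (\<lambda>c v. c * edge_boundary (?T i) (?H i) v))"
  have "edge_boundary 0 1 \<in> lev (\<lambda>x y v. x v + y v) B p"
    using edge_boundary_in_lev[OF bld_agrees_graph[OF dp]] by (simp add: B_def)
  moreover have "\<forall>i\<in>{1..n}. submodule UNIV (\<lambda>x y v. x v + y v) (\<lambda>v. 0) (\<lambda>r x v. r * x v) (B i)"
    unfolding B_def using submodule_cyclic by blast
  ultimately have "edge_boundary 0 1 \<in> lev (\<lambda>x y v. x v + y v) B q"
    using holds unfolding holds_in_module_def by blast
  then obtain d where d: "\<forall>j\<in>set (vars q). d j \<in> B j"
    and sums: "\<forall>A\<in>st_paths q. \<forall>v. (\<Sum>j\<in>A. d j v) = edge_boundary 0 1 v"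
    using path_sums_if_lev[OF dq] by blast
  from d have "\<forall>j\<in>set (vars q). \<exists>c. d j = (\<lambda>v. c * edge_boundary (?T j) (?H j) v)"
    by (auto simp: B_def)
  then have "\<exists>a. \<forall>j\<in>set (vars q). d j = (\<lambda>v. a j * edge_boundary (?T j) (?H j) v)"
    by (rule bchoice)
  then obtain a where a: "\<forall>j\<in>set (vars q). d j = (\<lambda>v. a j * edge_boundary (?T j) (?H j) v)"
    by blast
  have "is_solution p q 1 a"
    unfolding is_solution_def
  proof (intro allI impI)
    fix X v assume "\<exists>es. maxpath q es \<and> set es = X"
    then have X: "X \<in> st_paths q" using maxpath_edge_sets[OF dq] by blast
    then have X_sub: "X \<subseteq> set (vars q)" by (rule st_paths_subset_vars)
    have "Eff p a X v = (\<Sum>j\<in>X. (if ?H j = v then a j else 0) - (if ?T j = v then a j else 0))"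
      using finite_subset[OF X_sub] by (simp add: Eff_def sum_subtractf sum.inter_filter)
    also have "\<dots> = (\<Sum>j\<in>X. d j v)"
      using a X_sub by (intro sum.cong) (auto simp: edge_boundary_def)
    also have "\<dots> = Tr 1 v"
      using sums X by (simp add: edge_boundary_def Tr_def gsrc_def gsnk_def)
    finally show "Eff p a X v = Tr 1 v" .
  qed
  then show ?thesis unfolding problem_solvable_def by blast
qed

theorem lemma5p5:
  fixes p q :: lterm and n :: nat
  assumes "balanced_in p q n"
  shows "(problem_solvable p q (1::'a::ring_1) \<longleftrightarrow>
            (\<forall>(M::(nat \<Rightarrow> 'a) set) add z (sm :: 'a \<Rightarrow> (nat \<Rightarrow> 'a) \<Rightarrow> (nat \<Rightarrow> 'a)).
               left_module M add z sm \<longrightarrow> holds_in_module p q n M add z sm))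
       \<and> (problem_solvable p q (1::'a) \<longrightarrow>
            (\<forall>(M::'m set) add z (sm :: 'a \<Rightarrow> 'm \<Rightarrow> 'm).
               left_module M add z sm \<longrightarrow> holds_in_module p q n M add z sm))"
proof (intro conjI iffI allI impI)
  fix M :: "(nat \<Rightarrow> 'a) set" and madd z and sm :: "'a \<Rightarrow> (nat \<Rightarrow> 'a) \<Rightarrow> (nat \<Rightarrow> 'a)"
  assume "problem_solvable p q (1::'a)" and "left_module M madd z sm"
  then show "holds_in_module p q n M madd z sm"
    by (intro lmodule.holds_if_solvable[OF lmodule.intro assms])
next
  assume "\<forall>(M::(nat \<Rightarrow> 'a) set) add z (sm :: 'a \<Rightarrow> (nat \<Rightarrow> 'a) \<Rightarrow> (nat \<Rightarrow> 'a)).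
    left_module M add z sm \<longrightarrow> holds_in_module p q n M add z sm"
  then show "problem_solvable p q (1::'a)"
    using solvable_if_holds_in_function_module[OF assms] left_module_functions by blast
next
  fix M :: "'m set" and madd z and sm :: "'a \<Rightarrow> 'm \<Rightarrow> 'm"
  assume "problem_solvable p q (1::'a)" and "left_module M madd z sm"
  then show "holds_in_module p q n M madd z sm"
    by (intro lmodule.holds_if_solvable[OF lmodule.intro assms])
qed

end
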